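(* Let $d\ge1$ and let $G$ be the lattice $\mathbb Z^d$ (with $x\sim y$ iff $|x-y|_1=1$), unweighted, with Laplacian $\Delta u(x)=\frac1{\mu_0}\sum_{y\sim x}(u(y)-u(x))$ for a constant $\mu_0>0$, and $L=-\Delta$. Then for every $a>0$ there exists $v:\mathbb Z^d\to\mathbb R$ with $Lv(0)=a$, $Lv(0)\ge Lv(y)$ for all $y\sim0$, and $$\Delta\Psi_{\Upsilon'}(v)(0)=F(Lv(0))=F(a),$$ where $F(a)=\frac{D}{\mu_0^2}\exp\big(-\frac{\mu_0}{D}a\big)\big[\Upsilon\big(\frac{2\mu_0}{D}a\big)+(D-1)\Upsilon\big(-\frac{2\mu_0}{D(D-1)}a\big)\big]$ with $D=2d$.
   Context: $\Psi_H(v)(x)=\frac1{\mu_0}\sum_{y\sim x}H(v(y)-v(x))$ for $H:\mathbb R\to\mathbb R$; $\Upsilon(z)=e^z-1-z$, $\Upsilon'(z)=e^z-1$. *)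

theory Defs
  imports "HOL-Analysis.Analysis"
begin

text \<open>Vertices of the lattice Z^d are vectors int ^ 'd, with d = CARD('d) (d >= 1 automatically).\<close>

definition l1dist :: "int ^ 'd \<Rightarrow> int ^ 'd \<Rightarrow> int" where
  "l1dist x y = (\<Sum>i\<in>UNIV. \<bar>x $ i - y $ i\<bar>)"

definition zadj :: "int ^ 'd \<Rightarrow> int ^ 'd \<Rightarrow> bool" where
  "zadj x y \<longleftrightarrow> l1dist x y = 1"

definition zneighbors :: "int ^ 'd \<Rightarrow> (int ^ 'd) set" where
  "zneighbors x = {y. zadj x y}"

definition Lap :: "real \<Rightarrow> (int ^ 'd \<Rightarrow> real) \<Rightarrow> int ^ 'd \<Rightarrow> real" where
  "Lap mu0 u x = (1 / mu0) * (\<Sum>y\<in>zneighbors x. u y - u x)"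

definition Lop :: "real \<Rightarrow> (int ^ 'd \<Rightarrow> real) \<Rightarrow> int ^ 'd \<Rightarrow> real" where
  "Lop mu0 u x = - Lap mu0 u x"

definition Psi :: "real \<Rightarrow> (real \<Rightarrow> real) \<Rightarrow> (int ^ 'd \<Rightarrow> real) \<Rightarrow> int ^ 'd \<Rightarrow> real" where
  "Psi mu0 H v x = (1 / mu0) * (\<Sum>y\<in>zneighbors x. H (v y - v x))"

definition Upsilon :: "real \<Rightarrow> real" where
  "Upsilon z = exp z - 1 - z"

definition Upsilon' :: "real \<Rightarrow> real" where
  "Upsilon' z = exp z - 1"

definition Fbound :: "real \<Rightarrow> real \<Rightarrow> real \<Rightarrow> real" where
  "Fbound D mu0 a = D / mu0\<^sup>2 * exp (- (mu0 / D) * a) *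
     (Upsilon (2 * mu0 / D * a) + (D - 1) * Upsilon (- (2 * mu0 / (D * (D - 1))) * a))"

end

theory Submission
  imports Defs
begin

text \<open>Take the radial profile \<open>v\<close> with value 0 at the origin, \<open>b = -\<mu>\<^sub>0a/D\<close> on its \<open>D\<close>
  neighbours and \<open>c = 2bD/(D-1)\<close> on the rest of the lattice. Since \<open>\<int>\<^sup>d\<close> is bipartite, each neighbour
  \<open>y\<close> of the origin has the origin as one neighbour and \<open>D - 1\<close> neighbours carrying the value \<open>c\<close>; the
  choice of \<open>c\<close> makes \<open>Lv(y) = Lv(0) = a\<close>. Both \<open>Lv\<close> and \<open>\<Psi>(v)\<close> are then constant on the
  neighbours of the origin, so \<open>\<Delta>\<Psi>(v)(0)\<close> is an explicit exponential expression, which equals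
  \<open>F(a)\<close>.\<close>

lemma l1dist_0_axis: "l1dist 0 (axis i s :: int ^ 'd) = \<bar>s\<bar>"
  unfolding l1dist_def axis_def by (simp add: if_distrib cong: if_cong)

lemma l1dist_0_eq_1_imp_axis:
  fixes y :: "int ^ 'd"
  assumes "l1dist 0 y = 1"
  obtains i where "y = axis i 1 \<or> y = axis i (-1)"
proof -
  have sum_1: "(\<Sum>j\<in>UNIV. \<bar>y $ j\<bar>) = 1"
    using assms by (simp add: l1dist_def)
  obtain i where "y $ i \<noteq> 0"
    using sum_1 by (metis (no_types) sum.neutral abs_zero zero_neq_one)
  have split: "(\<Sum>j\<in>UNIV. \<bar>y $ j\<bar>) = \<bar>y $ i\<bar> + (\<Sum>j\<in>UNIV - {i}. \<bar>y $ j\<bar>)"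
    by (simp add: sum.remove)
  have "(\<Sum>j\<in>UNIV - {i}. \<bar>y $ j\<bar>) \<ge> 0"
    by (simp add: sum_nonneg)
  then have yi: "\<bar>y $ i\<bar> = 1" and rest: "(\<Sum>j\<in>UNIV - {i}. \<bar>y $ j\<bar>) = 0"
    using sum_1 split \<open>y $ i \<noteq> 0\<close> by linarith+
  from rest have "\<forall>j\<in>UNIV - {i}. y $ j = 0"
    by (subst (asm) sum_nonneg_eq_0_iff) auto
  then have "y = axis i (y $ i)"
    unfolding vec_eq_iff axis_def by auto
  moreover have "y $ i = 1 \<or> y $ i = -1"
    using yi by linarith
  ultimately show thesis
    using that by metis
qed

lemma zneighbors_0:
  "zneighbors (0 :: int ^ 'd) = range (\<lambda>i. axis i 1) \<union> range (\<lambda>i. axis i (-1))"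
proof
  show "zneighbors 0 \<subseteq> range (\<lambda>i. axis i 1) \<union> range (\<lambda>i. axis i (-1 :: int) :: int ^ 'd)"
  proof
    fix y :: "int ^ 'd"
    assume "y \<in> zneighbors 0"
    then have "l1dist 0 y = 1"
      by (simp add: zneighbors_def zadj_def)
    then show "y \<in> range (\<lambda>i. axis i 1) \<union> range (\<lambda>i. axis i (-1))"
      by (rule l1dist_0_eq_1_imp_axis) blast
  qed
qed (auto simp: zneighbors_def zadj_def l1dist_0_axis)

lemma finite_card_zneighbors_0:
  "finite (zneighbors (0 :: int ^ 'd)) \<and> card (zneighbors (0 :: int ^ 'd)) = 2 * CARD('d)"
proof -
  have inj: "inj (\<lambda>i. axis i s :: int ^ 'd)" if "s \<noteq> 0" for s :: int
    using that by (auto simp: inj_on_def axis_eq_axis)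
  have disjoint: "range (\<lambda>i. axis i 1 :: int ^ 'd) \<inter> range (\<lambda>i. axis i (-1)) = {}"
    by (auto simp: axis_eq_axis)
  show ?thesis
    unfolding zneighbors_0 using inj[of 1] inj[of "-1"] disjoint
    by (simp add: card_Un_disjoint card_image)
qed

lemma zadj_sym: "zadj x y \<longleftrightarrow> zadj y (x :: int ^ 'd)"
  unfolding zadj_def l1dist_def by (simp add: abs_minus_commute)

lemma zadj_iff_zadj_0_diff: "zadj x y \<longleftrightarrow> zadj 0 (y - x :: int ^ 'd)"
  unfolding zadj_def l1dist_def by (simp add: abs_minus_commute)

lemma zneighbors_translate: "zneighbors (x :: int ^ 'd) = (+) x ` zneighbors 0"
proof (intro equalityI subsetI)
  fix y
  assume "y \<in> zneighbors x"
  then have "y - x \<in> zneighbors 0"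
    by (simp add: zneighbors_def zadj_iff_zadj_0_diff[of x y])
  then show "y \<in> (+) x ` zneighbors 0"
    by (rule rev_image_eqI) simp
qed (auto simp: zneighbors_def zadj_iff_zadj_0_diff[of x])

lemma finite_card_zneighbors:
  "finite (zneighbors (x :: int ^ 'd)) \<and> card (zneighbors x) = 2 * CARD('d)"
  using finite_card_zneighbors_0[where 'd='d]
  by (simp add: zneighbors_translate[of x] card_image)

lemma even_l1dist_iff: "even (l1dist x y) \<longleftrightarrow> even (\<Sum>i\<in>UNIV. x $ i - y $ i :: int)"
proof -
  have "even (\<Sum>i\<in>UNIV. \<bar>x $ i - y $ i\<bar> - (x $ i - y $ i))"
    by (rule dvd_sum) (auto simp: abs_if)
  then show ?thesis
    unfolding l1dist_def sum_subtractf by (metis dvd_add_right_iff diff_add_cancel)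
qed

text \<open>The lattice is bipartite: adjacency flips the parity of the coordinate sum.\<close>

lemma zadj_zadj_imp_not_zadj:
  fixes x y z :: "int ^ 'd"
  assumes "zadj x y" and "zadj y z"
  shows "\<not> zadj x z"
proof
  assume "zadj x z"
  with assms have "odd (\<Sum>i\<in>UNIV. x $ i - y $ i)" "odd (\<Sum>i\<in>UNIV. y $ i - z $ i)"
    "odd (\<Sum>i\<in>UNIV. x $ i - z $ i)"
    by (simp_all add: zadj_def flip: even_l1dist_iff)
  moreover have "(\<Sum>i\<in>UNIV. x $ i - z $ i) = (\<Sum>i\<in>UNIV. x $ i - y $ i) + (\<Sum>i\<in>UNIV. y $ i - z $ i)"
    by (simp flip: sum.distrib)
  ultimately show False
    by simp
qed

lemma not_zadj_refl: "\<not> zadj x (x :: int ^ 'd)"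
  unfolding zadj_def l1dist_def by simp

lemma sum_zneighbors_const:
  assumes "\<And>y. zadj x y \<Longrightarrow> g y = k"
  shows "(\<Sum>y\<in>zneighbors (x :: int ^ 'd). g y) = 2 * real CARD('d) * k"
proof -
  have "(\<Sum>y\<in>zneighbors x. g y) = (\<Sum>y\<in>zneighbors x. k)"
    by (rule sum.cong) (auto simp: zneighbors_def assms)
  then show ?thesis
    using finite_card_zneighbors[of x] by simp
qed

lemma sum_zneighbors_split:
  fixes x y :: "int ^ 'd" and g :: "int ^ 'd \<Rightarrow> real"
  assumes "zadj y x" and "\<And>z. zadj y z \<Longrightarrow> z \<noteq> x \<Longrightarrow> g z = k"
  shows "(\<Sum>z\<in>zneighbors y. g z) = g x + (2 * real CARD('d) - 1) * k"
proof -
  have fin: "finite (zneighbors y)" and card: "card (zneighbors y) = 2 * CARD('d)"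
    using finite_card_zneighbors by blast+
  have x_mem: "x \<in> zneighbors y"
    using assms(1) by (simp add: zneighbors_def)
  have "(\<Sum>z\<in>zneighbors y. g z) = g x + (\<Sum>z\<in>zneighbors y - {x}. g z)"
    using fin x_mem by (simp add: sum.remove)
  also have "(\<Sum>z\<in>zneighbors y - {x}. g z) = (\<Sum>z\<in>zneighbors y - {x}. k)"
    by (rule sum.cong) (auto simp: zneighbors_def assms(2))
  also have "\<dots> = (2 * real CARD('d) - 1) * k"
    using fin x_mem card by (simp add: card_Diff_singleton of_nat_diff)
  finally show ?thesis .
qed

lemma Lap_const_on_zneighbors:
  assumes "\<And>y. zadj x y \<Longrightarrow> u y = k"
  shows "Lap mu0 u (x :: int ^ 'd) = 2 * real CARD('d) * (k - u x) / mu0"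
  unfolding Lap_def by (subst sum_zneighbors_const[of x _ "k - u x"]) (simp_all add: assms)

lemma Psi_const_on_zneighbors:
  assumes "\<And>y. zadj x y \<Longrightarrow> v y = k"
  shows "Psi mu0 H v (x :: int ^ 'd) = 2 * real CARD('d) * H (k - v x) / mu0"
  unfolding Psi_def by (subst sum_zneighbors_const[of x _ "H (k - v x)"]) (simp_all add: assms)

definition two_layer :: "real \<Rightarrow> real \<Rightarrow> int ^ 'd \<Rightarrow> real" where
  "two_layer b c x = (if x = 0 then 0 else if zadj 0 x then b else c)"

lemma two_layer_zadj_0: "zadj 0 y \<Longrightarrow> two_layer b c y = b"
  using not_zadj_refl by (auto simp: two_layer_def)

lemma two_layer_second_layer:
  "zadj 0 y \<Longrightarrow> zadj y z \<Longrightarrow> z \<noteq> 0 \<Longrightarrow> two_layer b c z = c"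
  using zadj_zadj_imp_not_zadj by (auto simp: two_layer_def)

lemma Lap_two_layer_0:
  "Lap mu0 (two_layer b c) (0 :: int ^ 'd) = 2 * real CARD('d) * b / mu0"
  by (simp add: Lap_const_on_zneighbors two_layer_zadj_0) (simp add: two_layer_def)

lemma Lap_two_layer_zadj_0:
  assumes "zadj 0 (y :: int ^ 'd)"
  shows "Lap mu0 (two_layer b c) y = (- b + (2 * real CARD('d) - 1) * (c - b)) / mu0"
  unfolding Lap_def
  using sum_zneighbors_split[OF assms[unfolded zadj_sym[of 0]], of "\<lambda>z. two_layer b c z - two_layer b c y" "c - b"]
  by (simp add: two_layer_zadj_0[OF assms] two_layer_second_layer[OF assms])
    (simp add: two_layer_def)

lemma Psi_two_layer_0:
  "Psi mu0 H (two_layer b c) (0 :: int ^ 'd) = 2 * real CARD('d) * H b / mu0"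
  by (simp add: Psi_const_on_zneighbors two_layer_zadj_0) (simp add: two_layer_def)

lemma Psi_two_layer_zadj_0:
  assumes "zadj 0 (y :: int ^ 'd)"
  shows "Psi mu0 H (two_layer b c) y = (H (- b) + (2 * real CARD('d) - 1) * H (c - b)) / mu0"
  unfolding Psi_def
  using sum_zneighbors_split[OF assms[unfolded zadj_sym[of 0]], of "\<lambda>z. H (two_layer b c z - two_layer b c y)" "H (c - b)"]
  by (simp add: two_layer_zadj_0[OF assms] two_layer_second_layer[OF assms])
    (simp add: two_layer_def)

lemma Lap_Psi_two_layer_0:
  defines "D \<equiv> 2 * real CARD('d)"
  shows "Lap mu0 (Psi mu0 H (two_layer b c)) (0 :: int ^ 'd)
    = D / mu0\<^sup>2 * (H (- b) + (D - 1) * H (c - b) - D * H b)"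
  unfolding D_def
  by (subst Lap_const_on_zneighbors[OF Psi_two_layer_zadj_0])
    (simp_all add: Psi_two_layer_0 power2_eq_square flip: diff_divide_distrib)

lemma Fbound_eq_Upsilon':
  fixes D mu0 a :: real
  assumes "D > 1" and "mu0 \<noteq> 0"
  defines "b \<equiv> - mu0 * a / D"
  shows "Fbound D mu0 a
    = D / mu0\<^sup>2 * (Upsilon' (- b) + (D - 1) * Upsilon' (b * (D + 1) / (D - 1)) - D * Upsilon' b)"
proof -
  have D: "D \<noteq> 0" "D - 1 \<noteq> 0"
    using assms(1) by simp_all
  have exp_arg: "exp (- (mu0 / D) * a) = exp b"
    and arg_1: "2 * mu0 / D * a = - 2 * b"
    and arg_2: "- (2 * mu0 / (D * (D - 1))) * a = 2 * b / (D - 1)"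
    unfolding b_def using D by (simp_all add: field_simps)
  have "Fbound D mu0 a
      = D / mu0\<^sup>2 * (exp b * (Upsilon (- 2 * b) + (D - 1) * Upsilon (2 * b / (D - 1))))"
    unfolding Fbound_def exp_arg arg_1 arg_2 by simp
  also have "exp b * (Upsilon (- 2 * b) + (D - 1) * Upsilon (2 * b / (D - 1)))
      = Upsilon' (- b) + (D - 1) * Upsilon' (b * (D + 1) / (D - 1)) - D * Upsilon' b"
  proof -
    have "exp b * exp (- 2 * b) = exp (- b)"
      and "exp b * exp (2 * b / (D - 1)) = exp (b * (D + 1) / (D - 1))"
      using D by (simp_all flip: exp_add add: field_simps)
    moreover have "(D - 1) * (2 * b / (D - 1)) = 2 * b"
      using D by simp
    ultimately show ?thesis
      unfolding Upsilon_def Upsilon'_def by (simp add: algebra_simps)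
  qed
  finally show ?thesis
    by simp
qed

theorem theorem3p12:
  fixes mu0 a :: real
  assumes "mu0 > 0" and "a > 0"
  shows "\<exists>v :: int ^ 'd \<Rightarrow> real.
           Lop mu0 v 0 = a \<and>
           (\<forall>y. zadj 0 y \<longrightarrow> Lop mu0 v 0 \<ge> Lop mu0 v y) \<and>
           Lap mu0 (Psi mu0 Upsilon' v) 0 = Fbound (2 * real CARD('d)) mu0 (Lop mu0 v 0) \<and>
           Fbound (2 * real CARD('d)) mu0 (Lop mu0 v 0) = Fbound (2 * real CARD('d)) mu0 a"
proof -
  define D where "D = 2 * real CARD('d)"
  have "D \<ge> 2"
    unfolding D_def by simp
  define b where "b = - mu0 * a / D"
  define v :: "int ^ 'd \<Rightarrow> real" where "v = two_layer b (2 * b * D / (D - 1))"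
  have c_minus_b: "2 * b * D / (D - 1) - b = b * (D + 1) / (D - 1)"
    using \<open>D \<ge> 2\<close> by (simp add: field_simps)
  have Lop_0: "Lop mu0 v 0 = a"
    using \<open>mu0 > 0\<close> \<open>D \<ge> 2\<close> by (simp add: Lop_def v_def Lap_two_layer_0 b_def flip: D_def)
  have Lop_zadj_0: "Lop mu0 v y = a" if "zadj 0 y" for y
    using \<open>mu0 > 0\<close> \<open>D \<ge> 2\<close>
    by (simp add: Lop_def v_def Lap_two_layer_zadj_0[OF that, folded D_def] c_minus_b b_def field_simps)
  have "Lap mu0 (Psi mu0 Upsilon' v) 0
      = D / mu0\<^sup>2 * (Upsilon' (- b) + (D - 1) * Upsilon' (2 * b * D / (D - 1) - b) - D * Upsilon' b)"
    unfolding v_def D_def by (rule Lap_Psi_two_layer_0)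
  also have "\<dots> = Fbound D mu0 a"
    using \<open>mu0 > 0\<close> \<open>D \<ge> 2\<close> by (simp add: c_minus_b Fbound_eq_Upsilon'[of D mu0 a, folded b_def])
  finally have "Lap mu0 (Psi mu0 Upsilon' v) 0 = Fbound D mu0 a" .
  with Lop_0 Lop_zadj_0 show ?thesis
    unfolding D_def by auto
qed

end
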